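(* Let $\lambda_0\in(0,1/2)$ and let $\nu$ be uniformly distributed on $[0,\pi]$, $n_1=\cos\nu$. Then $$E\left[|n_1|\arctan\left(\frac{4\lambda_0|n_1|}{4\lambda_0^2-1}\right)\right]=-2\lambda_0.$$
   Context: $\arctan$ denotes the principal branch with values in $(-\pi/2,\pi/2)$. *)

theory Defs
  imports "HOL-Analysis.Analysis"
begin

end

theory Submission
  imports Defs
begin

text \<open>With \<open>c = 4\<lambda>\<^sub>0 / (4\<lambda>\<^sub>0\<^sup>2 - 1)\<close> the integrand is \<open>cos \<nu> \<cdot> arctan (c cos \<nu>)\<close>, since
  \<open>arctan\<close> is odd. Integrating by parts leaves \<open>\<integral> c sin\<^sup>2\<nu> / (1 + c\<^sup>2 cos\<^sup>2\<nu>)\<close>, which with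
  \<open>s = \<surd>(1 + c\<^sup>2)\<close> has the elementary antiderivative
  \<open>((s - 1) \<nu> - s (arctan (s cot \<nu>) - arctan (cot \<nu>))) / c\<close>. Written as a single arctangent
  this antiderivative is smooth on all of \<open>\<real>\<close>, and the Fundamental Theorem of Calculus gives
  \<open>\<integral>\<^sub>0\<^sup>\<pi> cos \<nu> arctan (c cos \<nu>) d\<nu> = (s - 1) \<pi> / c\<close>. For our \<open>c\<close> the value \<open>(s - 1) / c\<close> is a
  half-angle tangent and equals \<open>-2\<lambda>\<^sub>0\<close>.\<close>

lemma integral_uniform_measure_Icc:
  fixes f :: "real \<Rightarrow> 'b::{banach, second_countable_topology}"
  assumes "a < b" and f: "f \<in> borel_measurable borel"
  shows "(\<integral>x. f x \<partial>uniform_measure lborel {a..b}) = inverse (b - a) *\<^sub>R (LBINT x=a..b. f x)"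
proof -
  have "uniform_measure lborel {a..b} = density lborel (\<lambda>x. ennreal (indicator {a..b} x / (b - a)))"
    using \<open>a < b\<close> divide_ennreal[of 1 "b - a"] unfolding uniform_measure_def
    by (intro density_cong) (auto simp: emeasure_lborel_Icc indicator_def)
  then have "(\<integral>x. f x \<partial>uniform_measure lborel {a..b})
      = (\<integral>x. (indicator {a..b} x / (b - a)) *\<^sub>R f x \<partial>lborel)"
    using f \<open>a < b\<close> by (simp add: integral_density)
  also have "\<dots> = inverse (b - a) *\<^sub>R (LBINT x:{a..b}. f x)"
    by (simp add: set_lebesgue_integral_def divide_inverse mult.commute flip: scaleR_scaleR)
  also have "\<dots> = inverse (b - a) *\<^sub>R (LBINT x=a..b. f x)"
    using \<open>a < b\<close> by (simp add: interval_integral_Icc)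
  finally show ?thesis .
qed

text \<open>Where \<open>sin x \<noteq> 0\<close>, \<open>cot_tilt s x\<close> is \<open>tan (arctan (s cot x) - arctan (cot x))\<close>.\<close>

definition cot_tilt :: "real \<Rightarrow> real \<Rightarrow> real" where
  "cot_tilt s x = (s - 1) * sin x * cos x / (s * (cos x)\<^sup>2 + (sin x)\<^sup>2)"

lemma cot_tilt_has_derivative:
  fixes s x :: real
  assumes "s * (cos x)\<^sup>2 + (sin x)\<^sup>2 \<noteq> 0"
  shows "(cot_tilt s has_real_derivative
           (s - 1) * (s * (cos x)\<^sup>2 - (sin x)\<^sup>2) / (s * (cos x)\<^sup>2 + (sin x)\<^sup>2)\<^sup>2) (at x)"
proof -
  have num: "((\<lambda>x. (s - 1) * sin x * cos x) has_real_derivative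
      (s - 1) * ((cos x)\<^sup>2 - (sin x)\<^sup>2)) (at x)"
    by (auto intro!: derivative_eq_intros simp: power2_eq_square algebra_simps)
  have den: "((\<lambda>x. s * (cos x)\<^sup>2 + (sin x)\<^sup>2) has_real_derivative
      2 * (1 - s) * sin x * cos x) (at x)"
    by (auto intro!: derivative_eq_intros simp: power2_eq_square algebra_simps)
  have "(s - 1) * ((cos x)\<^sup>2 - (sin x)\<^sup>2) * (s * (cos x)\<^sup>2 + (sin x)\<^sup>2)
          - (s - 1) * sin x * cos x * (2 * (1 - s) * sin x * cos x)
        = (s - 1) * (s * (cos x)\<^sup>2 - (sin x)\<^sup>2)"
    using sin_cos_squared_add[of x] by algebra
  then show ?thesis
    using DERIV_divide[OF num den assms] unfolding cot_tilt_def[abs_def]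
    by (simp add: power2_eq_square[of "_ + _"])
qed

lemma arctan_cot_tilt_has_derivative:
  fixes s c x :: real
  assumes s: "s\<^sup>2 = 1 + c\<^sup>2" "0 < s"
  shows "((\<lambda>x. arctan (cot_tilt s x)) has_real_derivative 1 - s / (1 + c\<^sup>2 * (cos x)\<^sup>2)) (at x)"
proof -
  let ?D = "s * (cos x)\<^sup>2 + (sin x)\<^sup>2" and ?K = "1 + c\<^sup>2 * (cos x)\<^sup>2"
  have "0 < ?D"
    using \<open>0 < s\<close> sin_cos_squared_add[of x] by (cases "cos x = 0") (auto intro: add_pos_nonneg)
  have "0 < ?K"
    by (simp add: add_pos_nonneg)
  have "?D\<^sup>2 + ((s - 1) * sin x * cos x)\<^sup>2 = ?K"
    using s(1) sin_cos_squared_add[of x] by algebra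
  then have arctan_factor: "1 + (cot_tilt s x)\<^sup>2 = ?K / ?D\<^sup>2"
    using \<open>0 < ?D\<close> unfolding cot_tilt_def by (simp add: field_simps)
  have tilt_numerator: "(s - 1) * (s * (cos x)\<^sup>2 - (sin x)\<^sup>2) = ?K - s"
    using s(1) sin_cos_squared_add[of x] by algebra
  have "((\<lambda>x. arctan (cot_tilt s x)) has_real_derivative
      inverse (1 + (cot_tilt s x)\<^sup>2) * ((s - 1) * (s * (cos x)\<^sup>2 - (sin x)\<^sup>2) / ?D\<^sup>2)) (at x)"
    using \<open>0 < ?D\<close> by (intro DERIV_chain2[OF DERIV_arctan] cot_tilt_has_derivative) simp
  also have "inverse (1 + (cot_tilt s x)\<^sup>2) * ((s - 1) * (s * (cos x)\<^sup>2 - (sin x)\<^sup>2) / ?D\<^sup>2)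
      = inverse (?K / ?D\<^sup>2) * ((?K - s) / ?D\<^sup>2)"
    by (simp only: arctan_factor tilt_numerator)
  also have "\<dots> = 1 - s / ?K"
  proof -
    have "inverse (k / d) * ((k - s) / d) = 1 - s / k" if "0 < k" "0 < d" for k d :: real
      using that by (simp add: field_simps)
    then show ?thesis
      using \<open>0 < ?D\<close> \<open>0 < ?K\<close> by simp
  qed
  finally show ?thesis .
qed

lemma cos_arctan_cos_antiderivative:
  fixes c x :: real
  assumes "c \<noteq> 0"
  defines "s \<equiv> sqrt (1 + c\<^sup>2)"
  shows "((\<lambda>x. sin x * arctan (c * cos x) + ((s - 1) * x - s * arctan (cot_tilt s x)) / c)
          has_real_derivative cos x * arctan (c * cos x)) (at x)"
proof -
  define K where "K = 1 + c\<^sup>2 * (cos x)\<^sup>2"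
  have "0 < K"
    unfolding K_def by (simp add: add_pos_nonneg)
  have s: "s\<^sup>2 = 1 + c\<^sup>2" "0 < s"
    unfolding s_def by (simp_all add: add_pos_nonneg)
  have "((\<lambda>x. sin x * arctan (c * cos x)) has_real_derivative
          cos x * arctan (c * cos x) - c * (sin x)\<^sup>2 / K) (at x)"
    unfolding K_def by (auto intro!: derivative_eq_intros simp: power2_eq_square field_simps)
  moreover have "((\<lambda>x. ((s - 1) * x - s * arctan (cot_tilt s x)) / c)
      has_real_derivative ((s - 1) * 1 - s * (1 - s / K)) / c) (at x)"
    unfolding K_def
    by (intro DERIV_cdivide DERIV_diff DERIV_cmult arctan_cot_tilt_has_derivative[OF s] DERIV_ident)
  moreover have "((s - 1) * 1 - s * (1 - s / K)) / c = c * (sin x)\<^sup>2 / K"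
  proof -
    have "s\<^sup>2 - K = c\<^sup>2 * (sin x)\<^sup>2"
      unfolding K_def using s(1) sin_cos_squared_add[of x] by algebra
    then show ?thesis
      using \<open>0 < K\<close> \<open>c \<noteq> 0\<close> by (simp add: field_simps power2_eq_square)
  qed
  ultimately show ?thesis
    by (auto dest: DERIV_add)
qed

lemma interval_integral_cos_arctan_cos:
  fixes c :: real
  assumes "c \<noteq> 0"
  shows "(LBINT x=0..pi. cos x * arctan (c * cos x)) = (sqrt (1 + c\<^sup>2) - 1) * pi / c"
proof -
  define s where "s = sqrt (1 + c\<^sup>2)"
  define G where "G x = sin x * arctan (c * cos x) + ((s - 1) * x - s * arctan (cot_tilt s x)) / c"
    for x
  have "(LBINT x=0..pi. cos x * arctan (c * cos x)) = G pi - G 0"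
    using cos_arctan_cos_antiderivative[OF \<open>c \<noteq> 0\<close>] unfolding zero_ereal_def
    by (intro interval_integral_FTC_finite)
      (auto intro!: continuous_intros simp: G_def s_def has_real_derivative_iff_has_vector_derivative
        intro: has_vector_derivative_at_within)
  also have "\<dots> = (s - 1) * pi / c"
    by (simp add: G_def cot_tilt_def)
  finally show ?thesis
    by (simp add: s_def)
qed

text \<open>With \<open>\<phi> = 2 arctan (2t)\<close> the quotient \<open>4t / (4t\<^sup>2 - 1)\<close> is \<open>-tan \<phi>\<close>, and the identity is the
  half-angle formula \<open>(sec \<phi> - 1) / tan \<phi> = tan (\<phi>/2)\<close>.\<close>

lemma half_angle_ratio_eq:
  fixes t :: real
  assumes t: "4 * t\<^sup>2 < 1"
  defines "c \<equiv> 4 * t / (4 * t\<^sup>2 - 1)"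
  shows "(sqrt (1 + c\<^sup>2) - 1) / c = - 2 * t"
proof -
  have c_alt: "c = - 4 * t / (1 - 4 * t\<^sup>2)"
    using t unfolding c_def by (simp add: field_simps)
  have "(1 - 4 * t\<^sup>2)\<^sup>2 + (4 * t)\<^sup>2 = (1 + 4 * t\<^sup>2)\<^sup>2"
    by algebra
  then have "1 + c\<^sup>2 = ((1 + 4 * t\<^sup>2) / (1 - 4 * t\<^sup>2))\<^sup>2"
    using t unfolding c_alt by (simp add: power_divide field_simps)
  then have "sqrt (1 + c\<^sup>2) = (1 + 4 * t\<^sup>2) / (1 - 4 * t\<^sup>2)"
    using t by simp
  then show ?thesis
    using t unfolding c_alt by (cases "t = 0") (simp_all add: field_simps power2_eq_square)
qed

theorem lemma8:
  fixes lambda0 :: real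
  assumes "0 < lambda0" and "lambda0 < 1/2"
  shows "(\<integral>\<nu>. \<bar>cos \<nu>\<bar> * arctan (4 * lambda0 * \<bar>cos \<nu>\<bar> / (4 * lambda0\<^sup>2 - 1))
            \<partial>(uniform_measure lborel {0..pi})) = - 2 * lambda0"
proof -
  define c where "c = 4 * lambda0 / (4 * lambda0\<^sup>2 - 1)"
  have "4 * lambda0\<^sup>2 < 1"
    using assms power_strict_mono[of lambda0 "1/2" 2] by (simp add: power2_eq_square)
  then have "c \<noteq> 0"
    using assms unfolding c_def by simp
  have integrand: "\<bar>cos \<nu>\<bar> * arctan (4 * lambda0 * \<bar>cos \<nu>\<bar> / (4 * lambda0\<^sup>2 - 1))
      = cos \<nu> * arctan (c * cos \<nu>)" for \<nu>
    unfolding c_def by (cases "0 \<le> cos \<nu>") (auto simp: arctan_minus)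
  have "(\<integral>\<nu>. cos \<nu> * arctan (c * cos \<nu>) \<partial>(uniform_measure lborel {0..pi}))
      = (LBINT x=0..pi. cos x * arctan (c * cos x)) / pi"
    by (subst integral_uniform_measure_Icc) (auto simp: divide_inverse mult.commute zero_ereal_def)
  also have "\<dots> = (sqrt (1 + c\<^sup>2) - 1) / c"
    using \<open>c \<noteq> 0\<close> by (simp add: interval_integral_cos_arctan_cos)
  also have "\<dots> = - 2 * lambda0"
    using half_angle_ratio_eq[OF \<open>4 * lambda0\<^sup>2 < 1\<close>] unfolding c_def .
  finally show ?thesis
    by (simp only: integrand)
qed

end
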